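(* Let $K\subseteq\mathbb{R}^n$ be a convex polytope. (a) If $K$ has $m+1$ vertices, then $\Gamma_l(K)\leq\Gamma_l(K_m^{1*})$ for all $l\in\mathbb{Z}^+$. (b) If $K$ is centrally symmetric and has $2m$ vertices, then $\Gamma_l(K)\leq\Gamma_l(K_m^{1})$ for all $l\in\mathbb{Z}^+$.
   Context: For a compact convex set $K\subseteq\mathbb{R}^d$ and $l\in\mathbb{Z}^+$, the covering functional is $\Gamma_l(K)=\inf\{\gamma>0:\exists C\subseteq\mathbb{R}^d,\ |C|=l,\ K\subseteq C+\gamma K\}$. $K_m^1=\{(x_1,\dots,x_m)\in\mathbb{R}^m:\sum_{i=1}^m|x_i|\leq1\}$ and $K_m^{1*}=\{(x_1,\dots,x_m)\in\mathbb{R}^m:\sum_{i=1}^m x_i\leq1,\ x_i\geq0\ \forall i\}$. *)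

theory Defs
  imports "HOL-Analysis.Analysis"
begin

definition covering_functional :: "nat \<Rightarrow> ('a::real_vector) set \<Rightarrow> real" where
  "covering_functional l K = Inf {\<gamma>. \<gamma> > 0 \<and>
     (\<exists>C. finite C \<and> card C = l \<and> K \<subseteq> {c + \<gamma> *\<^sub>R x | c x. c \<in> C \<and> x \<in> K})}"

definition cross_polytope :: "(real ^ 'm) set" where
  "cross_polytope = {x. (\<Sum>i\<in>UNIV. \<bar>x $ i\<bar>) \<le> 1}"

definition std_simplex :: "(real ^ 'm) set" where
  "std_simplex = {x. (\<Sum>i\<in>UNIV. x $ i) \<le> 1 \<and> (\<forall>i. 0 \<le> x $ i)}"

definition vertices :: "('a::real_vector) set \<Rightarrow> 'a set" where
  "vertices K = {v. v extreme_point_of K}"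

definition centrally_symmetric :: "('a::real_vector) set \<Rightarrow> bool" where
  "centrally_symmetric K \<longleftrightarrow> (\<exists>c. \<forall>x\<in>K. 2 *\<^sub>R c - x \<in> K)"

end

theory Submission
  imports Defs
begin

text \<open>A polytope is the convex hull of its vertices. If it has \<open>m + 1\<close> vertices, sending \<open>0\<close> to one
  vertex and the unit vectors to the others gives an affine map of \<open>K\<^sub>m\<^sup>1\<^sup>*\<close> onto \<open>K\<close>; if it is
  symmetric about \<open>c\<close> with \<open>2m\<close> vertices, the vertices fall into \<open>m\<close> antipodal pairs and sending
  \<open>\<plusminus>e\<^sub>i\<close> to the \<open>i\<close>-th pair gives an affine map of \<open>K\<^sub>m\<^sup>1\<close> onto \<open>K\<close>. A covering of the model body by
  \<open>l\<close> translates of \<open>\<gamma>\<close> times itself is carried by such a map to a covering of \<open>K\<close> by \<open>l\<close> translates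
  of \<open>\<gamma>K\<close>, so the covering functional can only decrease.\<close>

definition covering_radii :: "nat \<Rightarrow> ('a::real_vector) set \<Rightarrow> real set" where
  "covering_radii l K = {\<gamma>. \<gamma> > 0 \<and>
     (\<exists>C. finite C \<and> card C = l \<and> K \<subseteq> {c + \<gamma> *\<^sub>R x | c x. c \<in> C \<and> x \<in> K})}"

lemma covering_functional_eq_Inf_covering_radii:
  "covering_functional l K = Inf (covering_radii l K)"
  unfolding covering_functional_def covering_radii_def ..

lemma finite_superset_with_card:
  assumes "infinite (UNIV :: 'a set)" "finite A" "card A \<le> n"
  obtains B :: "'a set" where "A \<subseteq> B" "finite B" "card B = n"
proof -
  have "infinite (UNIV - A)" using assms by (simp add: Diff_infinite_finite)
  then obtain D where D: "finite D" "card D = n - card A" "D \<subseteq> UNIV - A"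
    using infinite_arbitrarily_large by blast
  then have "card (A \<union> D) = n"
    using assms by (subst card_Un_disjoint) auto
  with D show ?thesis using that[of "A \<union> D"] assms(2) by simp
qed

lemma one_mem_covering_radii:
  assumes "infinite (UNIV :: 'a::real_vector set)" "l \<ge> 1"
  shows "1 \<in> covering_radii l (K :: 'a set)"
proof -
  obtain C :: "'a set" where "0 \<in> C" "finite C" "card C = l"
    using finite_superset_with_card[of "{0}" l] assms by auto
  moreover have "x = 0 + 1 *\<^sub>R x" for x :: 'a by simp
  ultimately have "K \<subseteq> {c + 1 *\<^sub>R x | c x. c \<in> C \<and> x \<in> K}" by blast
  with \<open>finite C\<close> \<open>card C = l\<close> show ?thesis unfolding covering_radii_def by auto
qed

lemma covering_radii_affine_image:
  fixes L :: "'a::real_vector \<Rightarrow> 'b::real_vector"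
  assumes "linear L" "infinite (UNIV :: 'b set)" "\<gamma> \<in> covering_radii l S"
  shows "\<gamma> \<in> covering_radii l ((\<lambda>x. p + L x) ` S)"
proof -
  obtain C where "\<gamma> > 0" "finite C" "card C = l"
    and cover: "S \<subseteq> {c + \<gamma> *\<^sub>R x | c x. c \<in> C \<and> x \<in> S}"
    using assms(3) unfolding covering_radii_def by auto
  define shift where "shift c = p + L c - \<gamma> *\<^sub>R p" for c
  obtain D where D: "shift ` C \<subseteq> D" "finite D" "card D = l"
    using finite_superset_with_card[of "shift ` C" l] assms(2) \<open>finite C\<close> \<open>card C = l\<close>
    by (auto intro: card_image_le)
  have p_L: "p + L (c + \<gamma> *\<^sub>R x) = shift c + \<gamma> *\<^sub>R (p + L x)" for c x
    using \<open>linear L\<close> by (simp add: shift_def linear_add linear_scale algebra_simps)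
  have "(\<lambda>x. p + L x) ` S \<subseteq>
      {d + \<gamma> *\<^sub>R y | d y. d \<in> D \<and> y \<in> (\<lambda>x. p + L x) ` S}"
  proof clarify
    fix s assume "s \<in> S"
    then obtain c x where "c \<in> C" "x \<in> S" "s = c + \<gamma> *\<^sub>R x" using cover by blast
    then show "\<exists>d y. p + L s = d + \<gamma> *\<^sub>R y \<and> d \<in> D \<and> y \<in> (\<lambda>x. p + L x) ` S"
      using \<open>shift ` C \<subseteq> D\<close> p_L by blast
  qed
  with \<open>\<gamma> > 0\<close> D(2,3) show ?thesis unfolding covering_radii_def by blast
qed

text \<open>Infiniteness of the target lets the image of an \<open>l\<close>-point centre set, which may have
  fewer points, be padded to exactly \<open>l\<close> points; in the source it makes the set of admissible
  radii nonempty, so that its infimum is not the junk value \<open>Inf {}\<close>.\<close>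

lemma covering_functional_affine_image_le:
  fixes L :: "'a::real_vector \<Rightarrow> 'b::real_vector"
  assumes "linear L" "l \<ge> 1" "infinite (UNIV :: 'a set)" "infinite (UNIV :: 'b set)"
  shows "covering_functional l ((\<lambda>x. p + L x) ` S) \<le> covering_functional l S"
  unfolding covering_functional_eq_Inf_covering_radii
proof (rule cInf_superset_mono)
  show "covering_radii l S \<noteq> {}" using one_mem_covering_radii assms by blast
  show "bdd_below (covering_radii l ((\<lambda>x. p + L x) ` S))"
    by (rule bdd_belowI[of _ 0]) (simp add: covering_radii_def)
  show "covering_radii l S \<subseteq> covering_radii l ((\<lambda>x. p + L x) ` S)"
    using covering_radii_affine_image assms by blast
qed

lemma convex_hull_affine_image:
  assumes "linear L"
  shows "(\<lambda>x. p + L x) ` (convex hull S) = convex hull ((\<lambda>x. p + L x) ` S)"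
proof -
  have "(\<lambda>x. p + L x) ` T = (\<lambda>x. p + x) ` (L ` T)" for T by auto
  then show ?thesis by (simp only: convex_hull_translation convex_hull_linear_image[OF assms])
qed

lemma convex_sum_weights_le_1:
  fixes y :: "'i \<Rightarrow> 'a::real_vector"
  assumes "convex C" "0 \<in> C" "finite I" "\<And>i. i \<in> I \<Longrightarrow> a i \<ge> 0" "sum a I \<le> 1"
    "\<And>i. i \<in> I \<Longrightarrow> y i \<in> C"
  shows "(\<Sum>i\<in>I. a i *\<^sub>R y i) \<in> C"
proof (cases "sum a I = 0")
  case True
  then have "\<forall>i\<in>I. a i = 0" using assms(3,4) sum_nonneg_eq_0_iff by blast
  then show ?thesis using assms(2) by simp
next
  case False
  define s where "s = sum a I"
  have "s > 0" using False assms(4) sum_nonneg unfolding s_def by (metis order_le_less)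
  have "(\<Sum>i\<in>I. (a i / s) *\<^sub>R y i) \<in> C"
    using \<open>s > 0\<close> assms by (intro convex_sum) (simp_all add: s_def sum_divide_distrib[symmetric])
  then have "(1 - s) *\<^sub>R 0 + s *\<^sub>R (\<Sum>i\<in>I. (a i / s) *\<^sub>R y i) \<in> C"
    using \<open>s > 0\<close> assms(1,2,5) unfolding s_def by (intro convexD) auto
  then show ?thesis
    using \<open>s > 0\<close> by (simp add: scaleR_sum_right)
qed

lemma linear_sum_coordinates:
  "linear (\<lambda>x::real^'m. \<Sum>i\<in>UNIV. x $ i *\<^sub>R (w i :: 'a::real_vector))"
  by (rule linearI) (simp_all add: sum.distrib scaleR_add_left scaleR_sum_right)

lemma sum_coordinates_axis:
  "(\<Sum>j\<in>UNIV. axis i t $ j *\<^sub>R (w j :: 'a::real_vector)) = t *\<^sub>R w i"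
proof -
  have "(\<Sum>j\<in>UNIV. axis i t $ j *\<^sub>R w j) = (\<Sum>j\<in>UNIV. if j = i then t *\<^sub>R w i else 0)"
    by (intro sum.cong) (auto simp: axis_def)
  then show ?thesis by simp
qed

lemma convex_std_simplex: "convex std_simplex"
  unfolding convex_def std_simplex_def
  by (auto simp: sum.distrib sum_distrib_left[symmetric] intro: convex_bound_le)

lemma convex_cross_polytope: "convex cross_polytope"
  unfolding convex_def cross_polytope_def
proof (intro ballI allI impI, clarsimp)
  fix x y :: "real^'m" and u v :: real
  assume "(\<Sum>i\<in>UNIV. \<bar>x $ i\<bar>) \<le> 1" "(\<Sum>i\<in>UNIV. \<bar>y $ i\<bar>) \<le> 1"
    and uv: "0 \<le> u" "0 \<le> v" "u + v = 1"
  have "(\<Sum>i\<in>UNIV. \<bar>u * x $ i + v * y $ i\<bar>) \<le> (\<Sum>i\<in>UNIV. u * \<bar>x $ i\<bar> + v * \<bar>y $ i\<bar>)"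
    using uv by (intro sum_mono) (metis abs_mult abs_of_nonneg abs_triangle_ineq)
  also have "\<dots> = u * (\<Sum>i\<in>UNIV. \<bar>x $ i\<bar>) + v * (\<Sum>i\<in>UNIV. \<bar>y $ i\<bar>)"
    by (simp add: sum.distrib sum_distrib_left)
  also have "\<dots> \<le> 1"
    using uv \<open>(\<Sum>i\<in>UNIV. \<bar>x $ i\<bar>) \<le> 1\<close> \<open>(\<Sum>i\<in>UNIV. \<bar>y $ i\<bar>) \<le> 1\<close>
    by (auto intro: convex_bound_le)
  finally show "(\<Sum>i\<in>UNIV. \<bar>u * x $ i + v * y $ i\<bar>) \<le> 1" .
qed

lemma sum_coordinates_scaleR_axis: "(\<Sum>i\<in>UNIV. x $ i *\<^sub>R axis i 1) = (x :: real^'m)"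
  using basis_expansion[of x] by (simp add: scalar_mult_eq_scaleR)

lemma std_simplex_eq_convex_hull:
  "(std_simplex :: (real^'m) set) = convex hull (insert 0 (range (\<lambda>i. axis i 1)))"
    (is "_ = convex hull ?A")
proof
  show "convex hull ?A \<subseteq> std_simplex"
    by (rule hull_minimal) (auto simp: convex_std_simplex, auto simp: std_simplex_def axis_def)
  show "std_simplex \<subseteq> convex hull ?A"
  proof
    fix x :: "real^'m" assume "x \<in> std_simplex"
    then have "(\<Sum>i\<in>UNIV. x $ i *\<^sub>R axis i 1) \<in> convex hull ?A"
      by (intro convex_sum_weights_le_1) (auto simp: std_simplex_def hull_inc)
    then show "x \<in> convex hull ?A"
      unfolding sum_coordinates_scaleR_axis .
  qed
qed

lemma abs_scaleR_signed_axis: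
  "\<bar>t\<bar> *\<^sub>R axis i (if t \<ge> 0 then 1 else -1) = t *\<^sub>R axis i (1::real)"
  by (simp add: vec_eq_iff axis_def)

lemma cross_polytope_eq_convex_hull:
  "(cross_polytope :: (real^'m) set) =
     convex hull (range (\<lambda>i. axis i 1) \<union> range (\<lambda>i. axis i (-1)))"
    (is "_ = convex hull ?A")
proof
  have axis_mem: "axis i t \<in> cross_polytope" if "\<bar>t\<bar> = 1" for i and t :: real
    using that by (simp add: cross_polytope_def axis_def if_distrib[of abs] cong: if_cong)
  show "convex hull ?A \<subseteq> cross_polytope"
    using axis_mem[of 1] axis_mem[of "-1"]
    by (intro hull_minimal) (auto simp: convex_cross_polytope)
  show "cross_polytope \<subseteq> convex hull ?A"
  proof
    fix x :: "real^'m" and i :: 'm assume "x \<in> cross_polytope"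
    have "(1/2) *\<^sub>R axis i 1 + (1/2) *\<^sub>R axis i (-1) \<in> convex hull ?A"
      by (intro convexD) (auto simp: hull_inc)
    moreover have "(1/2) *\<^sub>R axis i 1 + (1/2) *\<^sub>R axis i (-1) = (0 :: real^'m)"
      by (simp add: axis_def vec_eq_iff)
    ultimately have "0 \<in> convex hull ?A" by simp
    then have "(\<Sum>i\<in>UNIV. \<bar>x $ i\<bar> *\<^sub>R axis i (if x $ i \<ge> 0 then 1 else -1)) \<in> convex hull ?A"
      using \<open>x \<in> cross_polytope\<close>
      by (intro convex_sum_weights_le_1) (auto simp: cross_polytope_def hull_inc)
    then show "x \<in> convex hull ?A"
      by (simp only: abs_scaleR_signed_axis sum_coordinates_scaleR_axis)
  qed
qed

text \<open>An injection into \<open>nat\<close> orders each orbit \<open>{v, r v}\<close>; \<open>H\<close> collects the smaller members.\<close>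

lemma involution_split_halves:
  assumes "finite V" and inv: "\<And>v. v \<in> V \<Longrightarrow> r v \<in> V \<and> r v \<noteq> v \<and> r (r v) = v"
  obtains H where "H \<subseteq> V" "V = H \<union> r ` H" "card V = 2 * card H"
proof -
  obtain g :: "'a \<Rightarrow> nat" where g: "inj_on g V"
    using ex_bij_betw_finite_nat[OF \<open>finite V\<close>] bij_betw_def by blast
  define H where "H = {v \<in> V. g v < g (r v)}"
  have "H \<subseteq> V" "finite H" using \<open>finite V\<close> unfolding H_def by auto
  have "v \<notin> r ` H" if "v \<in> H" for v
  proof
    assume "v \<in> r ` H"
    then obtain w where "w \<in> H" "v = r w" by blast
    then show False using that inv unfolding H_def by auto
  qed
  then have disjoint: "H \<inter> r ` H = {}" by blast
  have cover: "V = H \<union> r ` H"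
  proof
    show "V \<subseteq> H \<union> r ` H"
    proof
      fix v assume "v \<in> V"
      then have "g v \<noteq> g (r v)" using inv[OF \<open>v \<in> V\<close>] by (auto simp: inj_on_eq_iff[OF g])
      then have "v \<in> H \<or> r v \<in> H" using inv \<open>v \<in> V\<close> unfolding H_def by auto
      then show "v \<in> H \<union> r ` H" using inv[OF \<open>v \<in> V\<close>] by (auto intro: rev_image_eqI)
    qed
    show "H \<union> r ` H \<subseteq> V" using inv unfolding H_def by auto
  qed
  have "inj_on r H"
    using inv \<open>H \<subseteq> V\<close> by (intro inj_on_inverseI[where g = r]) auto
  then have "card V = 2 * card H"
    using cover \<open>finite H\<close> disjoint by (simp add: card_Un_disjoint card_image)
  with \<open>H \<subseteq> V\<close> cover show ?thesis by (rule that)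
qed

lemma reflection_in_open_segment:
  fixes c :: "'a::real_vector"
  assumes "x \<in> open_segment a b"
  shows "2 *\<^sub>R c - x \<in> open_segment (2 *\<^sub>R c - a) (2 *\<^sub>R c - b)"
proof -
  obtain u where "a \<noteq> b" "0 < u" "u < 1" "x = (1 - u) *\<^sub>R a + u *\<^sub>R b"
    using assms by (auto simp: in_segment)
  moreover have "2 *\<^sub>R c - ((1 - u) *\<^sub>R a + u *\<^sub>R b) = (1 - u) *\<^sub>R (2 *\<^sub>R c - a) + u *\<^sub>R (2 *\<^sub>R c - b)"
    by (simp add: algebra_simps)
  ultimately show ?thesis by (auto simp: in_segment)
qed

lemma extreme_point_of_reflection:
  assumes "\<forall>x\<in>K. 2 *\<^sub>R c - x \<in> K" and "v extreme_point_of K"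
  shows "(2 *\<^sub>R c - v) extreme_point_of K"
  unfolding extreme_point_of_def
proof (intro conjI ballI notI)
  show "2 *\<^sub>R c - v \<in> K" using assms by (auto simp: extreme_point_of_def)
  fix a b assume "a \<in> K" "b \<in> K" "2 *\<^sub>R c - v \<in> open_segment a b"
  then have "v \<in> open_segment (2 *\<^sub>R c - a) (2 *\<^sub>R c - b)"
    using reflection_in_open_segment[of "2 *\<^sub>R c - v" a b c] by simp
  then show False using assms \<open>a \<in> K\<close> \<open>b \<in> K\<close> unfolding extreme_point_of_def by blast
qed

lemma extreme_point_centre_imp_singleton:
  assumes "\<forall>x\<in>K. 2 *\<^sub>R c - x \<in> K" and "c extreme_point_of K"
  shows "K = {c}"
proof -
  have "x = c" if "x \<in> K" for x
  proof (rule ccontr)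
    assume "x \<noteq> c"
    moreover have "(2 *\<^sub>R c - x) - x = 2 *\<^sub>R (c - x)" by (simp add: scaleR_2 algebra_simps)
    ultimately have "x \<noteq> 2 *\<^sub>R c - x" by auto
    then have "c \<in> open_segment x (2 *\<^sub>R c - x)"
      using midpoint_in_open_segment[of x "2 *\<^sub>R c - x"] by (simp add: midpoint_def)
    then show False using assms \<open>x \<in> K\<close> unfolding extreme_point_of_def by blast
  qed
  then show ?thesis using assms(2) unfolding extreme_point_of_def by blast
qed

lemma polytope_eq_convex_hull_vertices:
  fixes K :: "'a::euclidean_space set"
  assumes "polytope K"
  shows "K = convex hull (vertices K)"
  unfolding vertices_def
  using Krein_Milman_Minkowski[OF polytope_imp_compact[OF assms] polytope_imp_convex[OF assms]] .

lemma polytope_affine_image_of_vertices: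
  fixes K :: "'a::euclidean_space set" and B :: "(real^'m) set"
  assumes "polytope K" "linear L" "vertices K = (\<lambda>x. p + L x) ` B"
  shows "K = (\<lambda>x. p + L x) ` (convex hull B)"
proof -
  have "K = convex hull ((\<lambda>x. p + L x) ` B)"
    using polytope_eq_convex_hull_vertices[OF assms(1)] assms(3) by simp
  then show ?thesis using convex_hull_affine_image[OF assms(2)] by simp
qed

lemma polytope_affine_image_std_simplex:
  fixes K :: "'a::euclidean_space set"
  assumes "polytope K" "card (vertices K) = CARD('m) + 1"
  obtains p and L :: "real^'m \<Rightarrow> 'a" where "linear L" "K = (\<lambda>x. p + L x) ` std_simplex"
proof -
  let ?V = "vertices K"
  have "finite ?V" using assms(2) by (intro card_ge_0_finite) simp
  then obtain v0 where "v0 \<in> ?V" using assms(2) by fastforce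
  with \<open>finite ?V\<close> assms(2) have "card (?V - {v0}) = CARD('m)" by simp
  with \<open>finite ?V\<close> obtain f where f: "bij_betw f (UNIV :: 'm set) (?V - {v0})"
    using finite_same_card_bij[of "UNIV :: 'm set" "?V - {v0}"] by auto
  define L where "L x = (\<Sum>i\<in>UNIV. x $ i *\<^sub>R (f i - v0))" for x :: "real^'m"
  have "linear L" unfolding L_def[abs_def] by (rule linear_sum_coordinates)
  have "(\<lambda>x. v0 + L x) ` insert 0 (range (\<lambda>i. axis i 1)) = insert v0 (range f)"
    using linear_0[OF \<open>linear L\<close>] by (auto simp: L_def sum_coordinates_axis image_image)
  also have "\<dots> = ?V" using f \<open>v0 \<in> ?V\<close> by (auto simp: bij_betw_def)
  finally have "K = (\<lambda>x. v0 + L x) ` std_simplex"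
    unfolding std_simplex_eq_convex_hull
    by (rule polytope_affine_image_of_vertices[OF assms(1) \<open>linear L\<close> sym])
  with \<open>linear L\<close> show ?thesis using that by blast
qed

lemma polytope_affine_image_cross_polytope:
  fixes K :: "'a::euclidean_space set"
  assumes "polytope K" "centrally_symmetric K" "card (vertices K) = 2 * CARD('m)"
  obtains p and L :: "real^'m \<Rightarrow> 'a" where "linear L" "K = (\<lambda>x. p + L x) ` cross_polytope"
proof -
  let ?V = "vertices K"
  obtain c where symmetric: "\<forall>x\<in>K. 2 *\<^sub>R c - x \<in> K"
    using assms(2) unfolding centrally_symmetric_def by blast
  define r where "r v = 2 *\<^sub>R c - v" for v
  have "finite ?V" using assms(3) by (intro card_ge_0_finite) simp
  have "r v \<in> ?V \<and> r v \<noteq> v \<and> r (r v) = v" if "v \<in> ?V" for v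
  proof (intro conjI)
    show "r v \<in> ?V"
      using extreme_point_of_reflection[OF symmetric] that by (simp add: vertices_def r_def)
    show "r (r v) = v" by (simp add: r_def)
    show "r v \<noteq> v"
    proof
      assume "r v = v"
      moreover have "r v - v = 2 *\<^sub>R (c - v)" by (simp add: r_def scaleR_2 algebra_simps)
      ultimately have "v = c" by simp
      then have "K = {c}"
        using extreme_point_centre_imp_singleton[OF symmetric] that by (simp add: vertices_def)
      then have "card ?V = 1" by (simp add: vertices_def)
      with assms(3) show False by simp
    qed
  qed
  then obtain H where "H \<subseteq> ?V" "?V = H \<union> r ` H" "card ?V = 2 * card H"
    by (rule involution_split_halves[OF \<open>finite ?V\<close>])
  have "finite H" using \<open>H \<subseteq> ?V\<close> \<open>finite ?V\<close> by (rule finite_subset)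
  moreover have "card H = CARD('m)" using \<open>card ?V = 2 * card H\<close> assms(3) by simp
  ultimately obtain h where h: "bij_betw h (UNIV :: 'm set) H"
    using finite_same_card_bij[of "UNIV :: 'm set" H] by auto
  define L where "L x = (\<Sum>i\<in>UNIV. x $ i *\<^sub>R (h i - c))" for x :: "real^'m"
  have "linear L" unfolding L_def[abs_def] by (rule linear_sum_coordinates)
  have "c + L (axis i 1) = h i" "c + L (axis i (-1)) = r (h i)" for i
    unfolding L_def sum_coordinates_axis by (simp_all add: r_def scaleR_2 algebra_simps)
  then have "(\<lambda>x. c + L x) ` (range (\<lambda>i. axis i 1) \<union> range (\<lambda>i. axis i (-1))) = range h \<union> r ` range h"
    by (simp add: image_Un image_image)
  also have "\<dots> = ?V" using h \<open>?V = H \<union> r ` H\<close> by (simp add: bij_betw_def)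
  finally have "K = (\<lambda>x. c + L x) ` cross_polytope"
    unfolding cross_polytope_eq_convex_hull
    by (rule polytope_affine_image_of_vertices[OF assms(1) \<open>linear L\<close> sym])
  with \<open>linear L\<close> show ?thesis using that by blast
qed

theorem theorem4p2:
  fixes K :: "(real ^ 'n) set"
  assumes "polytope K"
  shows "(card (vertices K) = CARD('m) + 1 \<longrightarrow>
            (\<forall>l::nat. l \<ge> 1 \<longrightarrow>
               covering_functional l K \<le> covering_functional l (std_simplex :: (real ^ 'm) set)))
       \<and> (centrally_symmetric K \<and> card (vertices K) = 2 * CARD('m) \<longrightarrow>
            (\<forall>l::nat. l \<ge> 1 \<longrightarrow>
               covering_functional l K \<le> covering_functional l (cross_polytope :: (real ^ 'm) set)))"
proof (intro conjI impI allI)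
  have affine_image_le: "covering_functional l ((\<lambda>x. p + L x) ` S) \<le> covering_functional l S"
    if "linear L" "l \<ge> 1" for l p S and L :: "real^'m \<Rightarrow> real^'n"
    by (rule covering_functional_affine_image_le[OF that infinite_UNIV_char_0 infinite_UNIV_char_0])
  fix l :: nat assume "l \<ge> 1"
  show "covering_functional l K \<le> covering_functional l (std_simplex :: (real ^ 'm) set)"
    if "card (vertices K) = CARD('m) + 1"
    using polytope_affine_image_std_simplex[OF assms that] affine_image_le \<open>l \<ge> 1\<close> by metis
  show "covering_functional l K \<le> covering_functional l (cross_polytope :: (real ^ 'm) set)"
    if "centrally_symmetric K \<and> card (vertices K) = 2 * CARD('m)"
    using polytope_affine_image_cross_polytope[OF assms] that affine_image_le \<open>l \<ge> 1\<close> by metis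
qed

end
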